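(* Let $G$ be a finite graph, and let $L$ be an induced subgraph of $G$. Let $\mathcal{F}$ be a set of connected subgraphs of $L$. Let $k,\theta\in\mathbb{N}$ and $r,r',\xi,\eta\in\mathbb{R}_{\ge0}$ with $r'\ge r/2$. Let $Z\subseteq V(G)$ with $N_G(V(L))\subseteq Z$ be $(\xi,\eta)$-centered in $G$. If $L$ does not contain $k$ members of $\mathcal{F}$ pairwise at distance in $G$ at least $r$, then there exist $Z^*\subseteq V(G)$ with $N_G^{\le r'}[Z]\subseteq Z^*\subseteq N_G^{\le r'}[Z]\cup V(L)$ and a (possibly empty) set $\mathcal{H}$ of disjoint connected induced subgraphs of $L$ with $|\mathcal{H}|\le k-1$ such that 1. $Z^*$ is $(\xi+\max\{2k-3,1\}\cdot(3\theta-3),\,\eta+2r')$-centered in $G$ and intersects all members of $\mathcal{F}\setminus(\mathcal{F}\cap\bigcup_{H\in\mathcal{H}}H)$, 2. $Z^*\setminus N_G^{\le 2r'}[Z]$ is $(\max\{2k-3,1\}\cdot(3\theta-3),\,2r')$-centered in $G$, and 3. for every $H\in\mathcal{H}$, the $(G,\mathcal{F}\cap H,r',\theta,Z^* )$-tangle in $H$ exists, $N_G(V(H))\subseteq Z^*$, and $H$ contains every component $C$ of $L-Z^*$ with $V(H)\cap V(C)\ne\emptyset$.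
   Context: $\operatorname{dist}_G$ is graph distance in $G$, extended to sets and subgraphs by minima; $N_G^{\le r}[S]=\{v:\operatorname{dist}_G(v,S)\le r\}$, $N_G(S)=N_G^{\le1}[S]\setminus S$. A set $Z$ is $(k,r)$-centered in $G$ if $Z\subseteq N_G^{\le r}[W]$ for some $W$ with $|W|\le k$. For a subgraph $A$ and vertex set $S$, $A-S$ deletes $S\cap V(A)$. For a set $\mathcal{F}$ of subgraphs, $\mathcal{F}-S$ is the set of members disjoint from $S$, and for a subgraph $L'$, $\mathcal{F}\cap L'$ is the set of members that are subgraphs of $L'$. A separation of a graph $L'$ is a pair $(A,B)$ of edge-disjoint subgraphs with $A\cup B=L'$, of order $|V(A)\cap V(B)|$. A tangle in $L'$ of order $\theta$ is a set $\mathcal{T}$ of separations of $L'$ of order less than $\theta$ such that (T1) for every separation $(A,B)$ of order less than $\theta$, $(A,B)\in\mathcal{T}$ or $(B,A)\in\mathcal{T}$; (T2) no three members $(A_i,B_i)$ satisfy $A_1\cup A_2\cup A_3=L'$; (T3) $V(A)\ne V(L')$ for all $(A,B)\in\mathcal{T}$. For an induced subgraph $L'$ of $G$, a set $\mathcal{F}'$ of subgraphs of $L'$, $r'\ge0$, $\theta\in\mathbb{N}$ and $Z'\subseteq V(G)$, the $(G,\mathcal{F}',r',\theta,Z')$-tangle in $L'$ is the set of all separations $(A,B)$ of $L'$ of order less than $\theta$ such that $A-N_G^{\le r'}[V(A\cap B)]$ contains no member of $\mathcal{F}'-N_G^{\le r'}[Z']$ but $B-N_G^{\le r'}[V(A\cap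 B)]$ contains a member of $\mathcal{F}'-N_G^{\le r'}[Z']$; it is said to exist when this set is a tangle in $L'$ of order $\theta$. *)

theory Defs
  imports Main "HOL-Library.Extended_Real"
begin

text \<open>Finite simple undirected graphs: a pair (vertex set, edge set), edges being
  two-element vertex sets. Subgraphs are represented the same way.\<close>

type_synonym 'a ugraph = "'a set \<times> 'a set set"

definition V :: "'a ugraph \<Rightarrow> 'a set" where "V G = fst G"
definition E :: "'a ugraph \<Rightarrow> 'a set set" where "E G = snd G"

definition finite_graph :: "'a ugraph \<Rightarrow> bool" where
  "finite_graph G \<longleftrightarrow> finite (V G) \<and>
     (\<forall>e\<in>E G. \<exists>u v. e = {u, v} \<and> u \<noteq> v \<and> u \<in> V G \<and> v \<in> V G)"

definition subgraph :: "'a ugraph \<Rightarrow> 'a ugraph \<Rightarrow> bool" where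
  "subgraph A H \<longleftrightarrow> V A \<subseteq> V H \<and> E A \<subseteq> E H \<and> (\<forall>e\<in>E A. e \<subseteq> V A)"

definition induced_subgraph :: "'a ugraph \<Rightarrow> 'a ugraph \<Rightarrow> bool" where
  "induced_subgraph A H \<longleftrightarrow> V A \<subseteq> V H \<and> E A = {e \<in> E H. e \<subseteq> V A}"

text \<open>Walks as vertex lists; reach G n u v: there is a walk with n edges from u to v in G.\<close>
definition walk :: "'a ugraph \<Rightarrow> 'a list \<Rightarrow> bool" where
  "walk G xs \<longleftrightarrow> xs \<noteq> [] \<and> set xs \<subseteq> V G \<and>
     (\<forall>i. Suc i < length xs \<longrightarrow> {xs ! i, xs ! Suc i} \<in> E G)"

definition reach :: "'a ugraph \<Rightarrow> nat \<Rightarrow> 'a \<Rightarrow> 'a \<Rightarrow> bool" where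
  "reach G n u v \<longleftrightarrow> (\<exists>xs. walk G xs \<and> hd xs = u \<and> last xs = v \<and> length xs = Suc n)"

definition connected :: "'a ugraph \<Rightarrow> bool" where
  "connected A \<longleftrightarrow> V A \<noteq> {} \<and> (\<forall>u\<in>V A. \<forall>v\<in>V A. \<exists>n. reach A n u v)"

text \<open>Graph distance (in enat, \<infinity> if unreachable).\<close>
definition gdist :: "'a ugraph \<Rightarrow> 'a \<Rightarrow> 'a \<Rightarrow> enat" where
  "gdist G u v = (INF n \<in> {n. reach G n u v}. enat n)"

definition setdist :: "'a ugraph \<Rightarrow> 'a set \<Rightarrow> 'a set \<Rightarrow> ereal" where
  "setdist G S T = (INF p \<in> S \<times> T. ereal_of_enat (gdist G (fst p) (snd p)))"

definition ball :: "'a ugraph \<Rightarrow> real \<Rightarrow> 'a set \<Rightarrow> 'a set" where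
  "ball G r S = {v \<in> V G. setdist G {v} S \<le> ereal r}"

definition nbhd :: "'a ugraph \<Rightarrow> 'a set \<Rightarrow> 'a set" where
  "nbhd G S = ball G 1 S - S"

definition centered :: "'a ugraph \<Rightarrow> real \<Rightarrow> real \<Rightarrow> 'a set \<Rightarrow> bool" where
  "centered G k r Z \<longleftrightarrow> (\<exists>W. finite W \<and> real (card W) \<le> k \<and> Z \<subseteq> ball G r W)"

definition del :: "'a ugraph \<Rightarrow> 'a set \<Rightarrow> 'a ugraph" where
  "del A S = (V A - S, {e \<in> E A. e \<inter> S = {}})"

definition avoid :: "'a ugraph set \<Rightarrow> 'a set \<Rightarrow> 'a ugraph set" where
  "avoid F S = {X \<in> F. V X \<inter> S = {}}"

definition members_in :: "'a ugraph set \<Rightarrow> 'a ugraph \<Rightarrow> 'a ugraph set" where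
  "members_in F L' = {X \<in> F. subgraph X L'}"

definition gunion :: "'a ugraph set \<Rightarrow> 'a ugraph" where
  "gunion \<H> = (\<Union>H\<in>\<H>. V H, \<Union>H\<in>\<H>. E H)"

definition component :: "'a ugraph \<Rightarrow> 'a ugraph \<Rightarrow> bool" where
  "component C A \<longleftrightarrow> induced_subgraph C A \<and> connected C \<and>
     (\<forall>e\<in>E A. e \<inter> V C \<noteq> {} \<longrightarrow> e \<subseteq> V C)"

definition separation :: "'a ugraph \<Rightarrow> 'a ugraph \<Rightarrow> 'a ugraph \<Rightarrow> bool" where
  "separation L' A B \<longleftrightarrow> subgraph A L' \<and> subgraph B L' \<and> E A \<inter> E B = {} \<and>
     V A \<union> V B = V L' \<and> E A \<union> E B = E L'"

definition sep_order :: "'a ugraph \<Rightarrow> 'a ugraph \<Rightarrow> nat" where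
  "sep_order A B = card (V A \<inter> V B)"

definition is_tangle :: "'a ugraph \<Rightarrow> ('a ugraph \<times> 'a ugraph) set \<Rightarrow> nat \<Rightarrow> bool" where
  "is_tangle L' T \<theta> \<longleftrightarrow>
     (\<forall>(A,B)\<in>T. separation L' A B \<and> sep_order A B < \<theta>) \<and>
     (\<forall>A B. separation L' A B \<and> sep_order A B < \<theta> \<longrightarrow> (A,B) \<in> T \<or> (B,A) \<in> T) \<and>
     (\<forall>(A1,B1)\<in>T. \<forall>(A2,B2)\<in>T. \<forall>(A3,B3)\<in>T.
         \<not> (V A1 \<union> V A2 \<union> V A3 = V L' \<and> E A1 \<union> E A2 \<union> E A3 = E L')) \<and>
     (\<forall>(A,B)\<in>T. V A \<noteq> V L')"

definition gtangle :: "'a ugraph \<Rightarrow> 'a ugraph set \<Rightarrow> real \<Rightarrow> nat \<Rightarrow> 'a set \<Rightarrow> 'a ugraph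
    \<Rightarrow> ('a ugraph \<times> 'a ugraph) set" where
  "gtangle G F' r' \<theta> Z' L' = {(A,B). separation L' A B \<and> sep_order A B < \<theta> \<and>
     \<not> (\<exists>X\<in>avoid F' (ball G r' Z'). subgraph X (del A (ball G r' (V A \<inter> V B)))) \<and>
     (\<exists>X\<in>avoid F' (ball G r' Z'). subgraph X (del B (ball G r' (V A \<inter> V B))))}"

definition gtangle_exists :: "'a ugraph \<Rightarrow> 'a ugraph set \<Rightarrow> real \<Rightarrow> nat \<Rightarrow> 'a set \<Rightarrow> 'a ugraph \<Rightarrow> bool" where
  "gtangle_exists G F' r' \<theta> Z' L' \<longleftrightarrow> is_tangle L' (gtangle G F' r' \<theta> Z' L') \<theta>"

end

theory Submission
  imports Defs
begin

text \<open>
  Starting from the deleted set ball G r' Z, we repeatedly add small separators inside the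
  live components of L, i.e. the components of L minus the deleted set that still contain a
  member of F avoiding the r'-ball around it. If a live component C carries no tangle of
  order \<theta>, then a separation that the tangle fails to orient, or three small sides covering C,
  give either at most \<theta> - 1 vertices separating two far members of C (a split), or at most
  3(\<theta> - 1) vertices whose r'-ball meets every far member of C (a kill; one such member is
  recorded as killed). Far members of distinct live components and killed members are
  pairwise at distance at least 2r' \<ge> r, so there are fewer than k of them. A split creates a
  live component and a kill creates a killed member, so with the potential
  (\<theta> - 1)(#live + 4 #killed) the number of separator vertices is at most
  (4k - 5)(\<theta> - 1) \<le> max(2k - 3, 1) \<cdot> 3(\<theta> - 1). Once every live component carries a
  tangle, the live components are the graphs H, and Z* is the deleted set together with the
  vertices of L within r' of it outside the live components.
\<close>

section \<open>Walks\<close>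

lemma reach_vertices: "reach H n u v \<Longrightarrow> u \<in> V H \<and> v \<in> V H"
  unfolding reach_def walk_def by (metis hd_in_set last_in_set subsetD)

lemma reach_0_iff: "reach H 0 u v \<longleftrightarrow> u = v \<and> u \<in> V H"
proof
  assume "reach H 0 u v"
  then obtain xs where "walk H xs" "hd xs = u" "last xs = v" "length xs = 1"
    unfolding reach_def by auto
  then show "u = v \<and> u \<in> V H"
    unfolding walk_def by (cases xs) auto
next
  assume "u = v \<and> u \<in> V H"
  then show "reach H 0 u v"
    unfolding reach_def walk_def by (intro exI[of _ "[u]"]) auto
qed

lemma walk_Cons_Cons_iff:
  "walk H (u # y # ys) \<longleftrightarrow> u \<in> V H \<and> {u, y} \<in> E H \<and> walk H (y # ys)"
proof
  assume w: "walk H (u # y # ys)"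
  then have edges: "\<And>i. Suc i < length (u # y # ys) \<Longrightarrow>
      {(u # y # ys) ! i, (u # y # ys) ! Suc i} \<in> E H"
    unfolding walk_def by blast
  have "{u, y} \<in> E H" using edges[of 0] by simp
  moreover have "{(y # ys) ! i, (y # ys) ! Suc i} \<in> E H" if "Suc i < length (y # ys)" for i
    using edges[of "Suc i"] that by simp
  ultimately show "u \<in> V H \<and> {u, y} \<in> E H \<and> walk H (y # ys)"
    using w unfolding walk_def by simp
next
  assume a: "u \<in> V H \<and> {u, y} \<in> E H \<and> walk H (y # ys)"
  have "{(u # y # ys) ! i, (u # y # ys) ! Suc i} \<in> E H" if "Suc i < length (u # y # ys)" for i
    using a that unfolding walk_def by (cases i) auto
  then show "walk H (u # y # ys)"
    using a unfolding walk_def by auto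
qed

lemma reach_Suc_iff: "reach H (Suc n) u w \<longleftrightarrow> (\<exists>v. u \<in> V H \<and> {u, v} \<in> E H \<and> reach H n v w)"
proof
  assume "reach H (Suc n) u w"
  then obtain xs where xs: "walk H xs" "hd xs = u" "last xs = w" "length xs = Suc (Suc n)"
    unfolding reach_def by auto
  then obtain y ys where xs_eq: "xs = u # y # ys" by (cases xs; cases "tl xs") auto
  have step: "u \<in> V H" "{u, y} \<in> E H" "walk H (y # ys)"
    using xs(1) unfolding xs_eq walk_Cons_Cons_iff by auto
  moreover have "reach H n y w"
    unfolding reach_def using step(3) xs(3,4) xs_eq by (intro exI[of _ "y # ys"]) auto
  ultimately show "\<exists>v. u \<in> V H \<and> {u, v} \<in> E H \<and> reach H n v w" by blast
next
  assume "\<exists>v. u \<in> V H \<and> {u, v} \<in> E H \<and> reach H n v w"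
  then obtain v ys where a: "u \<in> V H" "{u, v} \<in> E H" "walk H ys" "hd ys = v" "last ys = w"
      "length ys = Suc n"
    unfolding reach_def by auto
  then obtain ys' where ys: "ys = v # ys'" by (cases ys) auto
  have "walk H (u # ys)" unfolding ys walk_Cons_Cons_iff using a ys by simp
  then show "reach H (Suc n) u w"
    unfolding reach_def using a ys by (intro exI[of _ "u # ys"]) simp
qed

lemma reach_SucI: "u \<in> V H \<Longrightarrow> {u, x} \<in> E H \<Longrightarrow> reach H n x w \<Longrightarrow> reach H (Suc n) u w"
  using reach_Suc_iff by metis

lemma reach_SucE:
  assumes "reach H (Suc n) u w"
  obtains x where "u \<in> V H" "{u, x} \<in> E H" "reach H n x w"
  using assms reach_Suc_iff by metis

lemma reach_edge: "{u, v} \<in> E H \<Longrightarrow> u \<in> V H \<Longrightarrow> v \<in> V H \<Longrightarrow> reach H 1 u v"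
  by (auto simp: reach_Suc_iff reach_0_iff)

lemma reach_trans: "reach H n u v \<Longrightarrow> reach H m v w \<Longrightarrow> reach H (n + m) u w"
proof (induction n arbitrary: u)
  case 0
  then show ?case by (simp add: reach_0_iff)
next
  case (Suc n)
  then obtain x where "u \<in> V H" "{u, x} \<in> E H" "reach H n x v" by (auto elim: reach_SucE)
  with Suc.IH Suc.prems(2) show ?case by (auto intro: reach_SucI)
qed

lemma reach_sym: "reach H n u v \<Longrightarrow> reach H n v u"
proof (induction n arbitrary: u)
  case 0
  then show ?case by (auto simp: reach_0_iff)
next
  case (Suc n)
  then obtain x where x: "u \<in> V H" "{u, x} \<in> E H" "reach H n x v" by (auto elim: reach_SucE)
  have "reach H 1 x u"
    using x reach_vertices[OF x(3)] by (intro reach_edge) (auto simp: insert_commute)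
  from reach_trans[OF Suc.IH[OF x(3)] this] show ?case by simp
qed

lemma reach_invariant:
  assumes "reach H n u v" "P u"
    and "\<And>a b. {a, b} \<in> E H \<Longrightarrow> a \<in> V H \<Longrightarrow> b \<in> V H \<Longrightarrow> P a \<Longrightarrow> P b"
  shows "P v"
  using assms(1,2)
proof (induction n arbitrary: u)
  case 0
  then show ?case by (simp add: reach_0_iff)
next
  case (Suc n)
  then obtain x where x: "u \<in> V H" "{u, x} \<in> E H" "reach H n x v" by (auto elim: reach_SucE)
  have "P x" using assms(3)[OF x(2) x(1)] reach_vertices[OF x(3)] Suc.prems(2) by blast
  then show ?case using Suc.IH x(3) by blast
qed

lemma reach_restrict:
  assumes "reach H n u v" "u \<in> U"
    and closed: "\<And>a b. {a, b} \<in> E H \<Longrightarrow> a \<in> U \<Longrightarrow> b \<in> U"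
  shows "reach (U, {e \<in> E H. e \<subseteq> U}) n u v"
  using assms(1,2)
proof (induction n arbitrary: u)
  case 0
  then show ?case by (simp add: reach_0_iff V_def)
next
  case (Suc n)
  then obtain x where "u \<in> V H" "{u, x} \<in> E H" "reach H n x v" by (auto elim: reach_SucE)
  with Suc closed show ?case by (intro reach_SucI) (auto simp: V_def E_def)
qed

section \<open>Distances and balls\<close>

lemma gdist_le: "reach G n u v \<Longrightarrow> gdist G u v \<le> enat n"
  unfolding gdist_def by (rule INF_lower2[of n]) auto

lemma gdist_ge_iff:
  "ereal a \<le> ereal_of_enat (gdist G u v) \<longleftrightarrow> (\<forall>n. reach G n u v \<longrightarrow> a \<le> real n)"
proof
  assume "ereal a \<le> ereal_of_enat (gdist G u v)"
  then show "\<forall>n. reach G n u v \<longrightarrow> a \<le> real n"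
    using gdist_le
    by (metis ereal_of_enat_le_iff ereal_of_enat_simps(1) ereal_less_eq(3) order.trans)
next
  assume h: "\<forall>n. reach G n u v \<longrightarrow> a \<le> real n"
  show "ereal a \<le> ereal_of_enat (gdist G u v)"
  proof (cases "\<exists>n. reach G n u v")
    case True
    define m where "m = (LEAST m. reach G m u v)"
    have m: "reach G m u v" unfolding m_def using True by (metis LeastI)
    have "enat m \<le> gdist G u v"
      unfolding gdist_def m_def by (rule INF_greatest) (auto intro: Least_le)
    then have "gdist G u v = enat m" using gdist_le[OF m] by simp
    then show ?thesis using h m by simp
  next
    case False
    then show ?thesis by (simp add: gdist_def top_enat_def)
  qed
qed

lemma setdist_ge_iff:
  "ereal a \<le> setdist G A B \<longleftrightarrow> (\<forall>x\<in>A. \<forall>y\<in>B. \<forall>n. reach G n x y \<longrightarrow> a \<le> real n)"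
  unfolding setdist_def le_INF_iff gdist_ge_iff by auto

lemma setdist_le_iff:
  "setdist G A B \<le> ereal a \<longleftrightarrow> (\<exists>x\<in>A. \<exists>y\<in>B. \<exists>n. reach G n x y \<and> real n \<le> a)"
proof
  assume h: "setdist G A B \<le> ereal a"
  show "\<exists>x\<in>A. \<exists>y\<in>B. \<exists>n. reach G n x y \<and> real n \<le> a"
  proof (rule ccontr)
    assume none: "\<not> ?thesis"
    \<comment> \<open>the least natural number exceeding a\<close>
    define b where "b = real_of_int (max 0 (\<lfloor>a\<rfloor> + 1))"
    have "ereal b \<le> setdist G A B"
      unfolding setdist_ge_iff
    proof (intro ballI allI impI)
      fix x y n assume "x \<in> A" "y \<in> B" "reach G n x y"
      then have "a < real n" using none by force
      then have "\<lfloor>a\<rfloor> < int n" by linarith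
      then show "b \<le> real n" unfolding b_def by linarith
    qed
    with h have "ereal b \<le> ereal a" by (meson order.trans)
    then show False unfolding b_def ereal_less_eq by linarith
  qed
next
  assume "\<exists>x\<in>A. \<exists>y\<in>B. \<exists>n. reach G n x y \<and> real n \<le> a"
  then obtain x y n where xy: "x \<in> A" "y \<in> B" "reach G n x y" "real n \<le> a" by blast
  then have "setdist G A B \<le> ereal_of_enat (gdist G x y)"
    unfolding setdist_def by (intro INF_lower2[of "(x, y)"]) auto
  also have "\<dots> \<le> ereal_of_enat (enat n)"
    using gdist_le[OF xy(3)] by (simp only: ereal_of_enat_le_iff)
  also have "\<dots> \<le> ereal a" using xy(4) by simp
  finally show "setdist G A B \<le> ereal a" .
qed

lemma gdist_commute: "gdist G u v = gdist G v u"
  unfolding gdist_def by (metis reach_sym)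

lemma setdist_commute: "setdist G A B = setdist G B A"
proof -
  have "B \<times> A = prod.swap ` (A \<times> B)" by (simp add: product_swap)
  then show ?thesis unfolding setdist_def by (simp add: image_image gdist_commute)
qed

lemma mem_ball_iff: "v \<in> ball G a S \<longleftrightarrow> v \<in> V G \<and> (\<exists>s\<in>S. \<exists>n. reach G n v s \<and> real n \<le> a)"
  unfolding ball_def setdist_le_iff by auto

lemma ball_subset_V: "ball G a S \<subseteq> V G"
  unfolding ball_def by auto

lemma ball_mono: "S \<subseteq> T \<Longrightarrow> a \<le> b \<Longrightarrow> ball G a S \<subseteq> ball G b T"
  unfolding subset_iff mem_ball_iff by force

lemma ball_Un: "ball G a (S \<union> T) = ball G a S \<union> ball G a T"
  unfolding set_eq_iff Un_iff mem_ball_iff by blast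

lemma ball_empty: "ball G a {} = {}"
  unfolding set_eq_iff mem_ball_iff by blast

lemma subset_ball: "a \<ge> 0 \<Longrightarrow> S \<subseteq> V G \<Longrightarrow> S \<subseteq> ball G a S"
  unfolding mem_ball_iff subset_iff by (metis of_nat_0 reach_0_iff)

lemma ball_ball: "ball G a (ball G b S) \<subseteq> ball G (a + b) S"
proof
  fix v assume "v \<in> ball G a (ball G b S)"
  then obtain u n where "v \<in> V G" "u \<in> ball G b S" "reach G n v u" "real n \<le> a"
    using mem_ball_iff[of v G a] by blast
  moreover from \<open>u \<in> ball G b S\<close> obtain s m where "s \<in> S" "reach G m u s" "real m \<le> b"
    unfolding mem_ball_iff by blast
  ultimately show "v \<in> ball G (a + b) S"
    unfolding mem_ball_iff by (force dest: reach_trans)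
qed

section \<open>Subgraphs, components and separations\<close>

lemma V_del [simp]: "V (del A S) = V A - S"
  by (simp add: del_def V_def)

lemma E_del [simp]: "E (del A S) = {e \<in> E A. e \<inter> S = {}}"
  by (simp add: del_def E_def)

lemma V_pair [simp]: "V (X, Y) = X"
  by (simp add: V_def)

lemma E_pair [simp]: "E (X, Y) = Y"
  by (simp add: E_def)

lemma ugraph_eqI: "V A = V B \<Longrightarrow> E A = E B \<Longrightarrow> A = B"
  unfolding V_def E_def by (simp add: prod_eq_iff)

lemma subgraph_del_iff: "subgraph X (del A S) \<longleftrightarrow> subgraph X A \<and> V X \<inter> S = {}"
proof
  assume "subgraph X A \<and> V X \<inter> S = {}"
  then show "subgraph X (del A S)" unfolding subgraph_def by fastforce
qed (auto simp: subgraph_def)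

lemma connected_nonempty: "connected X \<Longrightarrow> V X \<noteq> {}"
  unfolding connected_def by (elim conjE)

lemma component_subset: "component C A \<Longrightarrow> V C \<subseteq> V A"
  unfolding component_def induced_subgraph_def by (elim conjE)

lemma component_edges: "component C A \<Longrightarrow> E C = {e \<in> E A. e \<subseteq> V C}"
  unfolding component_def induced_subgraph_def by (elim conjE)

lemma component_subgraph: "component C A \<Longrightarrow> subgraph C A"
  using component_subset[of C A] component_edges[of C A] unfolding subgraph_def by blast

lemma component_connected: "component C A \<Longrightarrow> connected C"
  unfolding component_def by (elim conjE)

lemma component_edge_closed:
  assumes "component C A" "{a, b} \<in> E A" "a \<in> V C"
  shows "b \<in> V C"
proof -
  have "{a, b} \<inter> V C \<noteq> {} \<longrightarrow> {a, b} \<subseteq> V C"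
    using assms(1,2) unfolding component_def by (elim conjE) (rule bspec)
  then show ?thesis using assms(3) by simp
qed

lemma connected_subgraph_in_component:
  assumes Y: "connected Y" "subgraph Y A" and C: "component C A"
    and y0: "y0 \<in> V Y" "y0 \<in> V C"
  shows "subgraph Y C"
proof -
  have VY: "V Y \<subseteq> V C"
  proof
    fix y assume "y \<in> V Y"
    then obtain n where "reach Y n y0 y" using Y(1) y0(1) unfolding connected_def by blast
    then show "y \<in> V C"
    proof (rule reach_invariant[where P = "\<lambda>v. v \<in> V C"])
      fix a b assume "{a, b} \<in> E Y" "a \<in> V C"
      moreover have "E Y \<subseteq> E A" using Y(2) unfolding subgraph_def by blast
      ultimately show "b \<in> V C" using component_edge_closed[OF C] by blast
    qed (rule y0(2))
  qed
  have "E Y \<subseteq> E C"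
  proof
    fix e assume "e \<in> E Y"
    then have "e \<in> E A" "e \<subseteq> V C" using Y(2) VY unfolding subgraph_def by blast+
    then show "e \<in> E C" using component_edges[OF C] by blast
  qed
  with VY Y(2) show ?thesis unfolding subgraph_def by blast
qed

lemma component_eq:
  assumes "component C1 A" "component C2 A" "x \<in> V C1" "x \<in> V C2"
  shows "C1 = C2"
proof -
  have "subgraph C2 C1"
    using connected_subgraph_in_component[OF component_connected[OF assms(2)]
        component_subgraph[OF assms(2)] assms(1) assms(4,3)] .
  moreover have "subgraph C1 C2"
    using connected_subgraph_in_component[OF component_connected[OF assms(1)]
        component_subgraph[OF assms(1)] assms(2) assms(3,4)] .
  ultimately show ?thesis unfolding subgraph_def by (blast intro: ugraph_eqI)
qed

lemma components_disjoint:
  "component C1 A \<Longrightarrow> component C2 A \<Longrightarrow> C1 \<noteq> C2 \<Longrightarrow> V C1 \<inter> V C2 = {}"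
  by (blast dest: component_eq)

lemma component_exists:
  assumes A: "\<forall>e\<in>E A. \<exists>a b. e = {a, b} \<and> a \<in> V A \<and> b \<in> V A" and v: "v \<in> V A"
  shows "\<exists>C. component C A \<and> v \<in> V C"
proof -
  define R where "R = {u. \<exists>n. reach A n v u}"
  define C where "C = (R, {e \<in> E A. e \<subseteq> R})"
  have "reach A 0 v v" using v by (simp add: reach_0_iff)
  then have vR: "v \<in> R" unfolding R_def by blast
  have closed: "b \<in> R" if ab: "{a, b} \<in> E A" "a \<in> R" for a b
  proof -
    obtain n where "reach A n v a" using ab(2) unfolding R_def by blast
    moreover have "\<exists>a' b'. {a, b} = {a', b'} \<and> a' \<in> V A \<and> b' \<in> V A"
      using A ab(1) by (rule bspec)
    then have "a \<in> V A" "b \<in> V A" by (auto simp: doubleton_eq_iff)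
    then have "reach A 1 a b" using ab(1) by (intro reach_edge)
    ultimately have "reach A (n + 1) v b" by (rule reach_trans)
    then show "b \<in> R" unfolding R_def by blast
  qed
  have RV: "R \<subseteq> V A" unfolding R_def using reach_vertices by fast
  have "connected C" unfolding connected_def
  proof (intro conjI ballI)
    show "V C \<noteq> {}" using vR unfolding C_def by auto
    fix x y assume "x \<in> V C" "y \<in> V C"
    then obtain n m where nm: "reach A n v x" "reach A m v y" "x \<in> R" unfolding C_def R_def by auto
    from reach_trans[OF reach_sym[OF nm(1)] nm(2)] have "reach A (n + m) x y" .
    then have "reach C (n + m) x y"
      unfolding C_def using nm(3) closed by (rule reach_restrict)
    then show "\<exists>n. reach C n x y" by blast
  qed
  moreover have "e \<subseteq> R" if "e \<in> E A" "e \<inter> R \<noteq> {}" for e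
  proof -
    obtain a b where ab: "e = {a, b}" using A \<open>e \<in> E A\<close> by blast
    then have "{b, a} \<in> E A" using \<open>e \<in> E A\<close> by (simp add: insert_commute)
    then show "e \<subseteq> R" using closed[of a b] closed[of b a] ab that by blast
  qed
  ultimately have "component C A"
    unfolding component_def induced_subgraph_def C_def using RV by simp
  then show ?thesis using vR unfolding C_def by auto
qed

lemma connected_subgraph_component:
  assumes A: "\<forall>e\<in>E A. \<exists>a b. e = {a, b} \<and> a \<in> V A \<and> b \<in> V A"
    and X: "connected X" "subgraph X A"
  obtains C where "component C A" "subgraph X C"
proof -
  obtain x where x: "x \<in> V X" using connected_nonempty[OF X(1)] by blast
  then have "x \<in> V A" using X(2) unfolding subgraph_def by blast
  then obtain C where "component C A" "x \<in> V C" using component_exists[OF A] by blast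
  then show ?thesis using that connected_subgraph_in_component[OF X] x by blast
qed

lemma component_del_induced: "component H (del A W) \<Longrightarrow> induced_subgraph H A"
  unfolding induced_subgraph_def
  using component_subset[of H "del A W"] component_edges[of H "del A W"] by auto

lemma component_subgraph_del:
  "component C (del A W') \<Longrightarrow> W \<subseteq> W' \<Longrightarrow> subgraph C (del A W)"
  using component_subgraph[of C "del A W'"] unfolding subgraph_def by auto

lemma component_del_Un:
  assumes C: "component C (del A W)" and S: "V C \<inter> S = {}"
  shows "component C (del A (W \<union> S))"
proof -
  have "E C = {e \<in> E (del A (W \<union> S)). e \<subseteq> V C}"
    using component_edges[OF C] S by auto
  moreover have "V C \<subseteq> V (del A (W \<union> S))" using component_subset[OF C] S by auto
  ultimately show ?thesis using C unfolding component_def induced_subgraph_def by auto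
qed

lemma subgraphD:
  assumes "subgraph X A"
  shows "V X \<subseteq> V A" "E X \<subseteq> E A" "e \<in> E X \<Longrightarrow> e \<subseteq> V X"
  using assms unfolding subgraph_def by blast+

lemma separationD:
  assumes "separation C A B"
  shows "subgraph A C" "subgraph B C" "E A \<inter> E B = {}" "V A \<union> V B = V C" "E A \<union> E B = E C"
  using assms unfolding separation_def by blast+

lemma separation_sym: "separation C A B \<Longrightarrow> separation C B A"
  unfolding separation_def by blast

lemma connected_avoiding_separator:
  assumes sep: "separation C A B" and X: "connected X" "subgraph X C"
    and avoid: "V X \<inter> (V A \<inter> V B) = {}" and x0: "x0 \<in> V X" "x0 \<in> V A"
  shows "V X \<subseteq> V A - V B"
proof
  fix y assume "y \<in> V X"
  then obtain n where "reach X n x0 y" using X(1) x0(1) unfolding connected_def by blast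
  then show "y \<in> V A - V B"
  proof (rule reach_invariant[where P = "\<lambda>v. v \<in> V A - V B"])
    show "x0 \<in> V A - V B" using x0 avoid by blast
    fix a b assume ab: "{a, b} \<in> E X" "b \<in> V X" "a \<in> V A - V B"
    have "{a, b} \<notin> E B" using ab(3) subgraphD(3)[OF separationD(2)[OF sep]] by blast
    then have "{a, b} \<in> E A" using ab(1) subgraphD(2)[OF X(2)] separationD(5)[OF sep] by blast
    then have "b \<in> V A" using subgraphD(3)[OF separationD(1)[OF sep]] by blast
    then show "b \<in> V A - V B" using ab(2) avoid by blast
  qed
qed

text \<open>Edges are arbitrary vertex sets, so the empty edge has to be excluded here.\<close>

lemma connected_subgraph_side:
  assumes sep: "separation C A B" and X: "connected X" "subgraph X C"
    and avoid: "V X \<inter> (V A \<inter> V B) = {}" and nonempty: "{} \<notin> E C"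
  shows "subgraph X A \<or> subgraph X B"
proof -
  have one_side: "subgraph X A'"
    if sep': "separation C A' B'" and "V X \<inter> (V A' \<inter> V B') = {}" "x0 \<in> V X" "x0 \<in> V A'"
    for A' B' x0
  proof -
    have VX: "V X \<subseteq> V A' - V B'" using connected_avoiding_separator[OF sep' X] that by blast
    have "e \<in> E A'" if "e \<in> E X" for e
    proof -
      have "e \<in> E C" "e \<subseteq> V X" using \<open>e \<in> E X\<close> subgraphD[OF X(2)] by blast+
      moreover have "e \<noteq> {}" using \<open>e \<in> E C\<close> nonempty by blast
      ultimately have "e \<notin> E B'" using VX subgraphD(3)[OF separationD(2)[OF sep']] by blast
      then show "e \<in> E A'" using \<open>e \<in> E C\<close> separationD(5)[OF sep'] by blast
    qed
    then show "subgraph X A'" using VX X(2) unfolding subgraph_def by blast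
  qed
  obtain x0 where x0: "x0 \<in> V X" using connected_nonempty[OF X(1)] by blast
  then have "x0 \<in> V A \<or> x0 \<in> V B" using subgraphD(1)[OF X(2)] separationD(4)[OF sep] by blast
  then show ?thesis
    using one_side[OF sep avoid x0] one_side[OF separation_sym[OF sep] _ x0] avoid by blast
qed

locale host_graph =
  fixes G L :: "'a ugraph"
  assumes finite_G: "finite_graph G" and induced_L: "induced_subgraph L G"
begin

lemma V_L_subset: "V L \<subseteq> V G"
  using induced_L unfolding induced_subgraph_def by (elim conjE)

lemma E_L: "E L = {e \<in> E G. e \<subseteq> V L}"
  using induced_L unfolding induced_subgraph_def by (elim conjE)

lemma edge_G: "e \<in> E G \<Longrightarrow> \<exists>a b. e = {a, b} \<and> a \<noteq> b \<and> a \<in> V G \<and> b \<in> V G"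
  using finite_G unfolding finite_graph_def by (elim conjE) (rule bspec)

lemma finite_V_G: "finite (V G)"
  using finite_G unfolding finite_graph_def by (elim conjE)

lemma finite_V_L: "finite (V L)"
  using finite_V_G V_L_subset by (rule finite_subset[rotated])

lemma finite_subgraphs_L: "finite {X. subgraph X L}"
proof -
  have "E L \<subseteq> Pow (V L)" using E_L by blast
  then have "finite (Pow (V L) \<times> Pow (E L))"
    using finite_V_L by (meson finite_Pow_iff finite_subset finite_SigmaI)
  moreover have "{X. subgraph X L} \<subseteq> Pow (V L) \<times> Pow (E L)"
  proof
    fix X :: "'a ugraph" assume "X \<in> {X. subgraph X L}"
    then have "V X \<in> Pow (V L)" "E X \<in> Pow (E L)" unfolding subgraph_def by auto
    moreover have "X = (V X, E X)" unfolding V_def E_def by simp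
    ultimately show "X \<in> Pow (V L) \<times> Pow (E L)" by (metis mem_Sigma_iff)
  qed
  ultimately show ?thesis by (rule finite_subset[rotated])
qed

lemma empty_notin_E_L: "{} \<notin> E L"
  using edge_G E_L by blast

lemma del_L_edges: "\<forall>e\<in>E (del L W). \<exists>a b. e = {a, b} \<and> a \<in> V (del L W) \<and> b \<in> V (del L W)"
proof
  fix e assume "e \<in> E (del L W)"
  then have e: "e \<in> E G" "e \<subseteq> V L" "e \<inter> W = {}" using E_L by auto
  obtain a b where "e = {a, b}" using edge_G[OF e(1)] by blast
  then show "\<exists>a b. e = {a, b} \<and> a \<in> V (del L W) \<and> b \<in> V (del L W)" using e by auto
qed

lemma edge_leaving_L:
  assumes "{x, y} \<in> E G" "x \<in> V L" "y \<notin> V L"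
  shows "y \<in> nbhd G (V L)"
proof -
  have "y \<in> V G" "x \<in> V G" using edge_G[OF assms(1)] by (auto simp: doubleton_eq_iff)
  moreover have "{y, x} \<in> E G" using assms(1) by (simp add: insert_commute)
  ultimately have "reach G 1 y x" by (intro reach_edge)
  then have "y \<in> ball G 1 (V L)" unfolding mem_ball_iff using \<open>y \<in> V G\<close> assms(2) by force
  then show ?thesis unfolding nbhd_def using assms(3) by blast
qed

context
  fixes W :: "'a set" and C :: "'a ugraph"
  assumes boundary: "nbhd G (V L) \<subseteq> W" and C: "component C (del L W)"
begin

lemma walk_leaving_component:
  "x \<in> V C \<Longrightarrow> reach G n x y \<Longrightarrow> y \<notin> V C \<Longrightarrow>
     \<exists>w\<in>W. \<exists>m\<le>n. reach G m x w \<and> reach G (n - m) w y"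
proof (induction n arbitrary: x)
  case 0
  then show ?case by (simp add: reach_0_iff)
next
  case (Suc n)
  from Suc.prems(2) obtain x' where x': "x \<in> V G" "{x, x'} \<in> E G" "reach G n x' y"
    by (rule reach_SucE)
  have x'V: "x' \<in> V G" using reach_vertices[OF x'(3)] by blast
  have xC: "x \<in> V L" "x \<notin> W" using component_subset[OF C] Suc.prems(1) by auto
  show ?case
  proof (cases "x' \<in> W")
    case True
    have "reach G 1 x x'" using x'(2) x'(1) x'V by (rule reach_edge)
    then show ?thesis using True x'(3) by (intro bexI[of _ x'] exI[of _ 1]) auto
  next
    case False
    have "x' \<in> V L" using edge_leaving_L[OF x'(2) xC(1)] boundary False by blast
    then have "{x, x'} \<in> E (del L W)" using x'(2) xC E_L False by auto
    then have "x' \<in> V C" using component_edge_closed[OF C] Suc.prems(1) by blast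
    from Suc.IH[OF this x'(3) Suc.prems(3)] obtain w m where
      w: "w \<in> W" "m \<le> n" "reach G m x' w" "reach G (n - m) w y" by blast
    have "reach G (Suc m) x w" using x'(1,2) w(3) by (rule reach_SucI)
    then show ?thesis using w by (intro bexI[of _ w] exI[of _ "Suc m"]) auto
  qed
qed

lemma setdist_across_component:
  assumes X: "V X \<subseteq> V C" "V X \<inter> ball G \<rho> W = {}"
    and Y: "V Y \<inter> V C = {}" "V Y \<inter> ball G \<rho> W = {}"
  shows "ereal (2 * \<rho>) \<le> setdist G (V X) (V Y)"
  unfolding setdist_ge_iff
proof (intro ballI allI impI)
  fix x y n assume xy: "x \<in> V X" "y \<in> V Y" and xy_walk: "reach G n x y"
  obtain w m where w: "w \<in> W" "m \<le> n" "reach G m x w" "reach G (n - m) w y"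
    using walk_leaving_component[OF _ xy_walk] xy X(1) Y(1) by blast
  have "x \<notin> ball G \<rho> W" "y \<notin> ball G \<rho> W" using xy X(2) Y(2) by blast+
  moreover have "x \<in> V G" "y \<in> V G" using reach_vertices[OF xy_walk] by auto
  ultimately have "\<not> real m \<le> \<rho>" "\<not> real (n - m) \<le> \<rho>"
    using w(1,3) reach_sym[OF w(4)] unfolding mem_ball_iff by blast+
  then show "2 * \<rho> \<le> real n" using w(2) by linarith
qed

lemma ball_outside_component:
  assumes "T \<inter> V C = {}"
  shows "ball G \<rho> T \<inter> V C \<subseteq> ball G \<rho> W"
proof
  fix v assume v: "v \<in> ball G \<rho> T \<inter> V C"
  then obtain s n where s: "v \<in> V G" "s \<in> T" "reach G n v s" "real n \<le> \<rho>"
    using mem_ball_iff[of v G \<rho> T] by blast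
  obtain w m where w: "w \<in> W" "m \<le> n" "reach G m v w"
    using walk_leaving_component[OF _ s(3)] v s(2) assms by blast
  have "real m \<le> \<rho>" using w(2) s(4) by linarith
  then show "v \<in> ball G \<rho> W" unfolding mem_ball_iff using s(1) w(1,3) by blast
qed

lemma nbhd_component_subset: "nbhd G (V C) \<subseteq> W"
proof
  fix v assume v: "v \<in> nbhd G (V C)"
  then obtain h n where hn: "v \<in> V G" "h \<in> V C" "reach G n v h" "real n \<le> 1" "v \<notin> V C"
    unfolding nbhd_def using mem_ball_iff[of v G 1 "V C"] by blast
  have "n \<noteq> 0"
  proof
    assume "n = 0"
    then have "v = h" using hn(3) by (simp add: reach_0_iff)
    then show False using hn(2,5) by simp
  qed
  then have "reach G (Suc 0) v h"
    using hn(3,4) by (metis One_nat_def le_Suc_eq le_zero_eq of_nat_le_1_iff)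
  then have "{h, v} \<in> E G" by (auto elim!: reach_SucE simp: reach_0_iff insert_commute)
  have hL: "h \<in> V L" "h \<notin> W" using component_subset[OF C] hn(2) by auto
  show "v \<in> W"
  proof (rule ccontr)
    assume "v \<notin> W"
    then have "v \<in> V L" using edge_leaving_L[OF \<open>{h, v} \<in> E G\<close> hL(1)] boundary by blast
    then have "{h, v} \<in> E (del L W)" using \<open>{h, v} \<in> E G\<close> hL \<open>v \<notin> W\<close> E_L by auto
    then show False using component_edge_closed[OF C] hn(2,5) by blast
  qed
qed

end

end

section \<open>Arithmetic of the separator budget\<close>

lemma budget_after_kill:
  fixes s s' t g g' c :: nat
  assumes "s = 0 \<or> s + t \<le> t * (g + 4 * c)" "s' \<le> s + 3 * t" "g \<le> g' + 1"
  shows "s' + t \<le> t * (g' + 4 * (c + 1))"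
proof -
  have "t * g \<le> t * (g' + 1)" using assms(3) by (rule mult_le_mono2)
  with assms(1,2) show ?thesis by (auto simp: algebra_simps)
qed

lemma budget_after_split:
  fixes s s' t g g' c :: nat
  assumes "s = 0 \<or> s + t \<le> t * (g + 4 * c)" "s' \<le> s + t" "g + 1 \<le> g'" "1 \<le> g"
  shows "s' + t \<le> t * (g' + 4 * c)"
proof -
  have "t * (g + 1) \<le> t * g'" "t * 2 \<le> t * g'"
    using assms(3,4) by (intro mult_le_mono2; linarith)+
  moreover have "t * g' \<le> t * (g' + 4 * c)" by simp
  ultimately show ?thesis
    using assms(1,2) by (elim disjE) (linarith, simp add: algebra_simps)
qed

lemma budget_final:
  fixes s t g c k :: nat
  assumes budget: "s + t \<le> t * (g + 4 * c)" and packing: "g + c < k"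
  shows "real s \<le> max (2 * real k - 3) 1 * (3 * real t)"
proof -
  have "4 * g + 4 * c + 4 \<le> 4 * k" using packing by linarith
  then have "real (4 * g + 4 * c + 4) \<le> real (4 * k)" by (simp only: of_nat_le_iff)
  then have "real g + 4 * real c \<le> 4 * (real k - 1)" by simp
  then have "real t * (real g + 4 * real c) \<le> real t * (4 * (real k - 1))"
    by (intro mult_left_mono) auto
  moreover have "real s + real t \<le> real t * (real g + 4 * real c)"
    using budget by (metis of_nat_add of_nat_le_iff of_nat_mult of_nat_numeral)
  ultimately have s: "real s \<le> real t * (4 * real k - 5)" by (simp add: algebra_simps)
  show ?thesis
  proof (cases "k \<ge> 2")
    case True
    then have "4 * real k - 5 \<le> 3 * max (2 * real k - 3) 1" by (simp add: max_def)
    then have "real t * (4 * real k - 5) \<le> real t * (3 * max (2 * real k - 3) 1)"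
      by (intro mult_left_mono) auto
    then show ?thesis using s by (simp add: algebra_simps)
  next
    case False
    then have "real t * (4 * real k - 5) \<le> 0" using packing by (simp add: mult_nonneg_nonpos)
    moreover have "0 \<le> max (2 * real k - 3) 1 * (3 * real t)" by simp
    ultimately show ?thesis using s by linarith
  qed
qed

section \<open>Refining the deleted set\<close>

definition scattered :: "'a ugraph \<Rightarrow> real \<Rightarrow> 'a ugraph set \<Rightarrow> bool" where
  "scattered G r \<S> \<longleftrightarrow> (\<forall>X\<in>\<S>. \<forall>Y\<in>\<S>. X \<noteq> Y \<longrightarrow> ereal r \<le> setdist G (V X) (V Y))"

lemma scattered_Un:
  assumes "scattered G r \<S>" "scattered G r \<T>"
    and "\<forall>X\<in>\<S>. \<forall>Y\<in>\<T>. ereal r \<le> setdist G (V X) (V Y)"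
  shows "scattered G r (\<S> \<union> \<T>)"
  unfolding scattered_def
proof (intro ballI impI)
  fix X Y assume "X \<in> \<S> \<union> \<T>" "Y \<in> \<S> \<union> \<T>" "X \<noteq> Y"
  then consider "X \<in> \<S>" "Y \<in> \<T>" | "Y \<in> \<S>" "X \<in> \<T>" | "X \<in> \<S>" "Y \<in> \<S>" | "X \<in> \<T>" "Y \<in> \<T>"
    by blast
  then show "ereal r \<le> setdist G (V X) (V Y)"
  proof cases
    case 2
    then show ?thesis using assms(3) setdist_commute by metis
  qed (use assms \<open>X \<noteq> Y\<close> in \<open>auto simp: scattered_def\<close>)
qed

locale tangle_cover = host_graph +
  fixes F :: "'a ugraph set" and Z :: "'a set" and r r' :: real and \<theta> k :: nat
  assumes members: "\<forall>X\<in>F. subgraph X L \<and> connected X"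
    and r_le: "r \<le> 2 * r'" and r'_nonneg: "r' \<ge> 0"
    and Z_subset: "Z \<subseteq> V G" and boundary_Z: "nbhd G (V L) \<subseteq> Z"
    and no_packing: "\<not> (\<exists>\<S>\<subseteq>F. finite \<S> \<and> card \<S> = k \<and> scattered G r \<S>)"
begin

text \<open>S collects the separator vertices added during the construction.\<close>

definition removed :: "'a set \<Rightarrow> 'a set" where
  "removed S = ball G r' Z \<union> S"

definition far_member :: "'a set \<Rightarrow> 'a ugraph \<Rightarrow> bool" where
  "far_member S X \<longleftrightarrow> X \<in> F \<and> V X \<inter> ball G r' (removed S) = {}"

definition live :: "'a set \<Rightarrow> 'a ugraph set" where
  "live S = {C. component C (del L (removed S)) \<and> (\<exists>X. far_member S X \<and> subgraph X C)}"

lemma removed_Un: "removed (S \<union> T) = removed S \<union> T"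
  unfolding removed_def by (simp add: Un_assoc)

lemma removed_subset_V: "S \<subseteq> V L \<Longrightarrow> removed S \<subseteq> V G"
  unfolding removed_def using ball_subset_V[of G r' Z] V_L_subset by blast

lemma boundary_removed: "nbhd G (V L) \<subseteq> removed S"
  unfolding removed_def using boundary_Z subset_ball[OF r'_nonneg Z_subset] by blast

lemma member_connected: "X \<in> F \<Longrightarrow> connected X"
  using members by blast

lemma member_subgraph: "X \<in> F \<Longrightarrow> subgraph X L"
  using members by blast

lemma finite_F: "finite F"
proof (rule finite_subset[OF _ finite_subgraphs_L])
  show "F \<subseteq> {X. subgraph X L}" using members by blast
qed

lemma far_member_antimono: "far_member (S \<union> T) X \<Longrightarrow> far_member S X"
  using ball_mono[of "removed S" "removed S \<union> T" r' r' G]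
  unfolding far_member_def removed_Un by blast

lemma far_member_Un: "far_member S X \<Longrightarrow> V X \<inter> ball G r' T = {} \<Longrightarrow> far_member (S \<union> T) X"
  unfolding far_member_def removed_Un ball_Un by blast

lemma far_member_disjoint:
  assumes "far_member S X" "S \<subseteq> V L"
  shows "V X \<inter> removed S = {}"
  using assms subset_ball[OF r'_nonneg removed_subset_V] unfolding far_member_def by blast

lemma member_component:
  assumes "X \<in> F" "V X \<inter> W = {}"
  obtains C where "component C (del L W)" "subgraph X C"
proof (rule connected_subgraph_component[OF del_L_edges])
  show "connected X" "subgraph X (del L W)"
    using assms members subgraph_del_iff by blast+
qed (rule that)

lemma far_member_nonempty: "far_member S X \<Longrightarrow> V X \<noteq> {}"
  using member_connected connected_nonempty unfolding far_member_def by blast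

lemma live_component: "C \<in> live S \<Longrightarrow> component C (del L (removed S))"
  unfolding live_def by blast

lemma live_far_member: "C \<in> live S \<Longrightarrow> \<exists>X. far_member S X \<and> subgraph X C"
  unfolding live_def by blast

lemma finite_live: "finite (live S)"
proof (rule finite_subset[OF _ finite_subgraphs_L])
  show "live S \<subseteq> {X. subgraph X L}"
    using component_subgraph live_component unfolding subgraph_def by fastforce
qed

lemma far_members_apart:
  assumes X: "far_member S X" "subgraph X C"
    and C: "component C (del L (removed S))"
    and Y: "far_member S Y" "V Y \<inter> V C = {}"
  shows "ereal r \<le> setdist G (V X) (V Y)"
proof -
  have "ereal (2 * r') \<le> setdist G (V X) (V Y)"
    using setdist_across_component[OF boundary_removed C] X Y subgraphD(1)
    unfolding far_member_def by blast
  then show ?thesis using r_le by (meson ereal_less_eq(3) order.trans)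
qed

lemma scattered_card_less: "\<S> \<subseteq> F \<Longrightarrow> scattered G r \<S> \<Longrightarrow> card \<S> < k"
proof (rule ccontr)
  assume \<S>: "\<S> \<subseteq> F" "scattered G r \<S>" and "\<not> card \<S> < k"
  then obtain \<S>' where "\<S>' \<subseteq> \<S>" "card \<S>' = k" by (meson not_less obtain_subset_with_card_n)
  moreover have "finite \<S>'" using \<open>\<S>' \<subseteq> \<S>\<close> \<S>(1) finite_F by (meson finite_subset)
  moreover have "scattered G r \<S>'" using \<S>(2) \<open>\<S>' \<subseteq> \<S>\<close> unfolding scattered_def by blast
  ultimately show False using no_packing \<S>(1) by blast
qed

text \<open>K records one member for every kill made so far.\<close>

definition killed_ok :: "'a set \<Rightarrow> 'a ugraph set \<Rightarrow> bool" where
  "killed_ok S K \<longleftrightarrow> K \<subseteq> F \<and> scattered G r K \<and> (\<forall>X\<in>K. V X \<inter> ball G r' (removed S) \<noteq> {}) \<and>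
     (\<forall>X\<in>K. \<forall>Y. far_member S Y \<longrightarrow> ereal r \<le> setdist G (V X) (V Y))"

lemma live_representatives:
  obtains R where "card R = card (live S)" "\<forall>X\<in>R. far_member S X" "scattered G r R"
proof -
  define rep where "rep C = (SOME X. far_member S X \<and> subgraph X C)" for C
  have rep: "far_member S (rep C)" "subgraph (rep C) C" if "C \<in> live S" for C
    unfolding rep_def using someI_ex[OF live_far_member[OF that]] by blast+
  have rep_in: "V (rep C) \<subseteq> V C" if "C \<in> live S" for C
    using rep(2)[OF that] subgraphD(1) by blast
  have "inj_on rep (live S)"
  proof (rule inj_onI)
    fix C1 C2 assume C: "C1 \<in> live S" "C2 \<in> live S" "rep C1 = rep C2"
    obtain x where "x \<in> V (rep C1)" using far_member_nonempty[OF rep(1)[OF C(1)]] by blast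
    then have "x \<in> V C1" "x \<in> V C2" using rep_in[OF C(1)] rep_in[OF C(2)] C(3) by auto
    then show "C1 = C2"
      using component_eq[OF live_component[OF C(1)] live_component[OF C(2)]] by blast
  qed
  moreover have "scattered G r (rep ` live S)"
    unfolding scattered_def
  proof (intro ballI impI)
    fix X Y assume "X \<in> rep ` live S" "Y \<in> rep ` live S" "X \<noteq> Y"
    then obtain C1 C2 where C: "C1 \<in> live S" "C2 \<in> live S" "C1 \<noteq> C2" "X = rep C1" "Y = rep C2"
      by blast
    have "V (rep C2) \<inter> V C1 = {}"
      using rep_in[OF C(2)]
        components_disjoint[OF live_component[OF C(1)] live_component[OF C(2)] C(3)] by blast
    then show "ereal r \<le> setdist G (V X) (V Y)"
      using far_members_apart[OF rep[OF C(1)] live_component[OF C(1)] rep(1)[OF C(2)]] C(4,5)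
      by blast
  qed
  ultimately show ?thesis using that card_image rep(1) by blast
qed

text \<open>Far members of distinct live components together with the killed members are
  pairwise r apart, which bounds their number.\<close>

lemma live_card_bound:
  assumes K: "killed_ok S K"
  shows "card (live S) + card K < k"
proof -
  obtain R where R: "card R = card (live S)" "\<forall>X\<in>R. far_member S X" "scattered G r R"
    using live_representatives by blast
  have "R \<inter> K = {}" "R \<union> K \<subseteq> F"
    using R(2) K unfolding killed_ok_def far_member_def by blast+
  moreover have "\<forall>X\<in>R. \<forall>Y\<in>K. ereal r \<le> setdist G (V X) (V Y)"
    using R(2) K setdist_commute unfolding killed_ok_def by metis
  then have "scattered G r (R \<union> K)"
    using scattered_Un R(3) K unfolding killed_ok_def by blast
  ultimately have "card (R \<union> K) < k" "finite (R \<union> K)"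
    using scattered_card_less finite_F finite_subset by blast+
  then show ?thesis using card_Un_disjoint[OF _ _ \<open>R \<inter> K = {}\<close>] R(1) by simp
qed

lemma killed_ok_Un:
  assumes "killed_ok S K"
  shows "killed_ok (S \<union> T) K"
proof -
  have "ball G r' (removed S) \<subseteq> ball G r' (removed (S \<union> T))"
    unfolding removed_Un by (rule ball_mono) auto
  then show ?thesis using assms far_member_antimono[of S T] unfolding killed_ok_def by blast
qed

lemma killed_ok_insert:
  assumes K: "killed_ok S K" and X: "far_member S X"
    and near: "V X \<inter> ball G r' (removed (S \<union> T)) \<noteq> {}"
    and apart: "\<forall>Y. far_member (S \<union> T) Y \<longrightarrow> ereal r \<le> setdist G (V X) (V Y)"
  shows "killed_ok (S \<union> T) (insert X K)"
proof -
  have "\<forall>Y\<in>K. ereal r \<le> setdist G (V X) (V Y)"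
    using K X setdist_commute unfolding killed_ok_def by metis
  moreover have "scattered G r {X}" unfolding scattered_def by blast
  ultimately have "scattered G r (insert X K)"
    using K scattered_Un[of G r "{X}" K] unfolding killed_ok_def by simp
  moreover have "insert X K \<subseteq> F" using K X unfolding killed_ok_def far_member_def by blast
  ultimately show ?thesis
    using killed_ok_Un[OF K, of T] near apart unfolding killed_ok_def by blast
qed

text \<open>A kill costs at most 3(\<theta> - 1) vertices and adds a killed member, a split costs at
  most \<theta> - 1 vertices and adds a live component. The disjunct S = {} covers the start, when
  possibly no component is live.\<close>

definition budget_ok :: "'a set \<Rightarrow> 'a ugraph set \<Rightarrow> bool" where
  "budget_ok S K \<longleftrightarrow> S = {} \<or> card S + (\<theta> - 1) \<le> (\<theta> - 1) * (card (live S) + 4 * card K)"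

definition invariant :: "'a set \<Rightarrow> 'a ugraph set \<Rightarrow> bool" where
  "invariant S K \<longleftrightarrow> S \<subseteq> V L \<and> killed_ok S K \<and> budget_ok S K"

lemma invariant_empty: "invariant {} {}"
  unfolding invariant_def killed_ok_def budget_ok_def scattered_def by simp

definition kill_cut :: "'a set \<Rightarrow> 'a ugraph \<Rightarrow> 'a set \<Rightarrow> bool" where
  "kill_cut S C T \<longleftrightarrow> T \<subseteq> V C \<and> card T \<le> 3 * (\<theta> - 1) \<and>
     (\<forall>X. far_member S X \<and> subgraph X C \<longrightarrow> V X \<inter> ball G r' T \<noteq> {})"

definition split_cut :: "'a set \<Rightarrow> 'a ugraph \<Rightarrow> 'a set \<Rightarrow> bool" where
  "split_cut S C T \<longleftrightarrow> T \<subseteq> V C \<and> card T \<le> \<theta> - 1 \<and>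
     (\<exists>XA XB. far_member (S \<union> T) XA \<and> subgraph XA C \<and> far_member (S \<union> T) XB \<and> subgraph XB C \<and>
        (\<forall>C'. component C' (del L (removed (S \<union> T))) \<longrightarrow> subgraph XA C' \<longrightarrow> \<not> subgraph XB C'))"

lemma live_diff_subset_live_Un:
  assumes C: "C \<in> live S" and T: "T \<subseteq> V C"
  shows "live S - {C} \<subseteq> live (S \<union> T)"
proof
  fix C' assume C': "C' \<in> live S - {C}"
  have comp: "component C' (del L (removed S))" using C' live_component by blast
  have "V C' \<inter> V C = {}"
    using components_disjoint[OF comp live_component[OF C]] C' by blast
  then have disj: "V C' \<inter> T = {}" using T by blast
  then have "component C' (del L (removed (S \<union> T)))"
    unfolding removed_Un by (rule component_del_Un[OF comp])
  moreover obtain Y where Y: "far_member S Y" "subgraph Y C'" using C' live_far_member by blast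
  moreover have "ball G r' T \<inter> V C' \<subseteq> ball G r' (removed S)"
    using ball_outside_component[OF boundary_removed comp] disj by blast
  then have "far_member (S \<union> T) Y"
    using Y subgraphD(1)[OF Y(2)] unfolding far_member_def removed_Un ball_Un by blast
  ultimately show "C' \<in> live (S \<union> T)" unfolding live_def by blast
qed

lemma card_live_Un:
  assumes "C \<in> live S" "T \<subseteq> V C"
  shows "card (live S) \<le> card (live (S \<union> T)) + 1"
proof -
  have "card (live S - {C}) \<le> card (live (S \<union> T))"
    using live_diff_subset_live_Un[OF assms] finite_live by (rule card_mono[rotated])
  moreover have "card (live S - {C}) = card (live S) - 1" using assms(1) by simp
  ultimately show ?thesis by linarith
qed

lemma kill_cut_nonempty:
  assumes "C \<in> live S" "kill_cut S C T"
  shows "T \<noteq> {}"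
proof
  assume "T = {}"
  obtain X where "far_member S X" "subgraph X C" using live_far_member[OF assms(1)] by blast
  then have "V X \<inter> ball G r' T \<noteq> {}" using assms(2) unfolding kill_cut_def by blast
  then show False using \<open>T = {}\<close> by (simp add: ball_empty)
qed

text \<open>A far member left after a kill cut lies in another component, hence far from every
  far member of C.\<close>

lemma kill_cut_apart:
  assumes S: "S \<subseteq> V L" and C: "C \<in> live S" and cut: "kill_cut S C T"
    and X: "far_member S X" "subgraph X C" and Y: "far_member (S \<union> T) Y"
  shows "ereal r \<le> setdist G (V X) (V Y)"
proof -
  have YS: "far_member S Y" using Y by (rule far_member_antimono)
  obtain CY where CY: "component CY (del L (removed S))" "subgraph Y CY"
    using member_component far_member_disjoint[OF YS S] YS unfolding far_member_def by blast
  have "ball G r' T \<subseteq> ball G r' (removed (S \<union> T))"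
    unfolding removed_Un by (rule ball_mono) auto
  then have "CY \<noteq> C" using cut YS CY(2) Y unfolding kill_cut_def far_member_def by blast
  then have "V Y \<inter> V C = {}"
    using components_disjoint[OF CY(1) live_component[OF C]] subgraphD(1)[OF CY(2)] by blast
  then show ?thesis using far_members_apart[OF X live_component[OF C] YS] by blast
qed

lemma kill_step:
  assumes I: "invariant S K" and C: "C \<in> live S" and cut: "kill_cut S C T"
  shows "\<exists>K'. invariant (S \<union> T) K'"
proof -
  have S: "S \<subseteq> V L" and K: "killed_ok S K" and budget: "budget_ok S K"
    using I unfolding invariant_def by blast+
  obtain X where X: "far_member S X" "subgraph X C" using live_far_member[OF C] by blast
  have "ball G r' T \<subseteq> ball G r' (removed (S \<union> T))"
    unfolding removed_Un by (rule ball_mono) auto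
  then have near: "V X \<inter> ball G r' (removed (S \<union> T)) \<noteq> {}"
    using cut X unfolding kill_cut_def by blast
  have K': "killed_ok (S \<union> T) (insert X K)"
    using killed_ok_insert[OF K X(1) near] kill_cut_apart[OF S C cut X] by blast
  have "X \<notin> K" using K X unfolding killed_ok_def far_member_def by blast
  moreover have "finite K" using K finite_F unfolding killed_ok_def by (blast intro: finite_subset)
  ultimately have card_K: "card (insert X K) = card K + 1" by simp
  have T: "T \<subseteq> V C" "card T \<le> 3 * (\<theta> - 1)" using cut unfolding kill_cut_def by blast+
  have "card (S \<union> T) \<le> card S + 3 * (\<theta> - 1)" using card_Un_le[of S T] T(2) by linarith
  moreover have "card S = 0 \<or> card S + (\<theta> - 1) \<le> (\<theta> - 1) * (card (live S) + 4 * card K)"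
    using budget unfolding budget_ok_def by auto
  ultimately have "card (S \<union> T) + (\<theta> - 1) \<le> (\<theta> - 1) * (card (live (S \<union> T)) + 4 * (card K + 1))"
    using budget_after_kill card_live_Un[OF C T(1)] by blast
  then have "budget_ok (S \<union> T) (insert X K)" unfolding budget_ok_def card_K by simp
  moreover have "S \<union> T \<subseteq> V L" using S T(1) component_subset[OF live_component[OF C]] by auto
  ultimately show ?thesis using K' unfolding invariant_def by blast
qed

lemma split_cut_nonempty:
  assumes C: "C \<in> live S" and cut: "split_cut S C T"
  shows "T \<noteq> {}"
proof
  assume "T = {}"
  then have "component C (del L (removed (S \<union> T)))" using live_component[OF C] by simp
  then show False using cut unfolding split_cut_def by blast
qed

lemma card_live_split:
  assumes S: "S \<subseteq> V L" and C: "C \<in> live S" and cut: "split_cut S C T"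
  shows "card (live S) + 1 \<le> card (live (S \<union> T))"
proof -
  have T: "T \<subseteq> V C" using cut unfolding split_cut_def by blast
  then have ST: "S \<union> T \<subseteq> V L" using S component_subset[OF live_component[OF C]] by auto
  have new: "\<exists>C'. C' \<in> live (S \<union> T) \<and> subgraph X C' \<and> C' \<notin> live S - {C}"
    if X: "far_member (S \<union> T) X" "subgraph X C" for X
  proof -
    obtain C' where C': "component C' (del L (removed (S \<union> T)))" "subgraph X C'"
      using member_component far_member_disjoint[OF X(1) ST] X(1) unfolding far_member_def by blast
    have "C' \<notin> live S - {C}"
    proof
      assume C'S: "C' \<in> live S - {C}"
      obtain x where "x \<in> V X" using far_member_nonempty[OF far_member_antimono[OF X(1)]] by blast
      then have "x \<in> V C'" "x \<in> V C" using subgraphD(1)[OF C'(2)] subgraphD(1)[OF X(2)] by blast+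
      then show False
        using component_eq[OF live_component[of C'] live_component[OF C]] C'S by blast
    qed
    moreover have "C' \<in> live (S \<union> T)" using C' X(1) unfolding live_def by blast
    ultimately show ?thesis using C'(2) by blast
  qed
  obtain XA XB
    where X: "far_member (S \<union> T) XA" "subgraph XA C" "far_member (S \<union> T) XB" "subgraph XB C"
    and apart: "\<forall>C'. component C' (del L (removed (S \<union> T))) \<longrightarrow> subgraph XA C' \<longrightarrow> \<not> subgraph XB C'"
    using cut unfolding split_cut_def by blast
  obtain CA where CA: "CA \<in> live (S \<union> T)" "subgraph XA CA" "CA \<notin> live S - {C}"
    using new[OF X(1,2)] by blast
  obtain CB where CB: "CB \<in> live (S \<union> T)" "subgraph XB CB" "CB \<notin> live S - {C}"
    using new[OF X(3,4)] by blast
  have "CA \<noteq> CB" using apart live_component[OF CA(1)] CA(2) CB(2) by blast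
  have "card (insert CA (insert CB (live S - {C}))) \<le> card (live (S \<union> T))"
    using live_diff_subset_live_Un[OF C T] CA(1) CB(1) finite_live by (intro card_mono) auto
  moreover have "card (insert CA (insert CB (live S - {C}))) = card (live S - {C}) + 2"
    using CA(3) CB(3) \<open>CA \<noteq> CB\<close> finite_live by simp
  moreover have "card (live S - {C}) = card (live S) - 1" using C by simp
  moreover have "0 < card (live S)" using C finite_live[of S] by (auto simp: card_gt_0_iff)
  ultimately show ?thesis by linarith
qed

lemma split_step:
  assumes I: "invariant S K" and C: "C \<in> live S" and cut: "split_cut S C T"
  shows "invariant (S \<union> T) K"
proof -
  have S: "S \<subseteq> V L" and K: "killed_ok S K" and budget: "budget_ok S K"
    using I unfolding invariant_def by blast+
  have T: "T \<subseteq> V C" "card T \<le> \<theta> - 1" using cut unfolding split_cut_def by blast+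
  have "card (S \<union> T) \<le> card S + (\<theta> - 1)" using card_Un_le[of S T] T(2) by linarith
  moreover have "card S = 0 \<or> card S + (\<theta> - 1) \<le> (\<theta> - 1) * (card (live S) + 4 * card K)"
    using budget unfolding budget_ok_def by auto
  moreover have "1 \<le> card (live S)"
    using C finite_live[of S] by (auto simp: Suc_le_eq card_gt_0_iff)
  ultimately have "card (S \<union> T) + (\<theta> - 1) \<le> (\<theta> - 1) * (card (live (S \<union> T)) + 4 * card K)"
    using budget_after_split card_live_split[OF S C cut] by blast
  then have "budget_ok (S \<union> T) K" unfolding budget_ok_def by simp
  moreover have "S \<union> T \<subseteq> V L" using S T(1) component_subset[OF live_component[OF C]] by auto
  ultimately show ?thesis using killed_ok_Un[OF K] unfolding invariant_def by blast
qed

section \<open>Cuts from a missing tangle\<close>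

definition side_has_member :: "'a set \<Rightarrow> 'a ugraph \<Rightarrow> 'a ugraph \<Rightarrow> 'a set \<Rightarrow> bool" where
  "side_has_member S C A U \<longleftrightarrow> (\<exists>X. far_member S X \<and> subgraph X C \<and> subgraph X (del A (ball G r' U)))"

lemma mem_avoid_members_in:
  "X \<in> avoid (members_in F C) (ball G r' (removed S)) \<longleftrightarrow> far_member S X \<and> subgraph X C"
  unfolding avoid_def members_in_def far_member_def by blast

lemma mem_gtangle_iff:
  "(A, B) \<in> gtangle G (members_in F C) r' \<theta> (removed S) C \<longleftrightarrow>
     separation C A B \<and> sep_order A B < \<theta> \<and>
     \<not> side_has_member S C A (V A \<inter> V B) \<and> side_has_member S C B (V A \<inter> V B)"
  unfolding gtangle_def side_has_member_def mem_Collect_eq case_prod_conv Bex_def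
    mem_avoid_members_in by (simp only: conj_assoc)

lemma separator_subset_ball:
  assumes C: "C \<in> live S" and sep: "separation C A B"
  shows "V A \<inter> V B \<subseteq> ball G r' (V A \<inter> V B)"
proof -
  have "V A \<inter> V B \<subseteq> V G"
    using separationD(4)[OF sep] component_subset[OF live_component[OF C]] V_L_subset by auto
  then show ?thesis by (rule subset_ball[OF r'_nonneg])
qed

lemma far_member_side:
  assumes C: "C \<in> live S" and sep: "separation C A B"
    and X: "far_member S X" "subgraph X C" and avoid: "V X \<inter> ball G r' (V A \<inter> V B) = {}"
  shows "subgraph X (del A (ball G r' (V A \<inter> V B))) \<or> subgraph X (del B (ball G r' (V A \<inter> V B)))"
proof -
  have "V X \<inter> (V A \<inter> V B) = {}" using avoid separator_subset_ball[OF C sep] by blast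
  moreover have "connected X" using X(1) member_connected unfolding far_member_def by blast
  moreover have "E C \<subseteq> E L" using component_edges[OF live_component[OF C]] by auto
  then have "{} \<notin> E C" using empty_notin_E_L by blast
  ultimately have "subgraph X A \<or> subgraph X B"
    using connected_subgraph_side[OF sep _ X(2)] by blast
  then show ?thesis using avoid subgraph_del_iff by blast
qed

lemma gtangle_proper:
  assumes C: "C \<in> live S"
    and AB: "(A, B) \<in> gtangle G (members_in F C) r' \<theta> (removed S) C"
  shows "V A \<noteq> V C"
proof
  assume VA: "V A = V C"
  have sep: "separation C A B" and has: "side_has_member S C B (V A \<inter> V B)"
    using AB unfolding mem_gtangle_iff by blast+
  have "V B \<subseteq> V A" using separationD(4)[OF sep] VA by blast
  then have U: "V A \<inter> V B = V B" by blast
  obtain X where X: "far_member S X" "subgraph X (del B (ball G r' (V B)))"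
    using has unfolding side_has_member_def U by blast
  have "V B \<subseteq> V G"
    using \<open>V B \<subseteq> V A\<close> VA component_subset[OF live_component[OF C]] V_L_subset by auto
  then have "V X = {}"
    using subgraphD(1)[OF X(2)] subset_ball[OF r'_nonneg, of "V B" G] by auto
  then show False using far_member_nonempty[OF X(1)] by blast
qed

lemma gtangle_small_side:
  assumes C: "C \<in> live S"
    and AB: "(A, B) \<in> gtangle G (members_in F C) r' \<theta> (removed S) C"
    and X: "far_member S X" "subgraph X C" and avoid: "V X \<inter> ball G r' (V A \<inter> V B) = {}"
  shows "V X \<inter> V A = {}"
proof -
  have sep: "separation C A B" and no: "\<not> side_has_member S C A (V A \<inter> V B)"
    using AB unfolding mem_gtangle_iff by blast+
  then have "subgraph X (del B (ball G r' (V A \<inter> V B)))"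
    using far_member_side[OF C sep X avoid] X unfolding side_has_member_def by blast
  then have "V X \<subseteq> V B" using subgraphD(1) by fastforce
  then show ?thesis using avoid separator_subset_ball[OF C sep] by blast
qed

lemma component_beyond_separator:
  assumes C: "C \<in> live S" and sep: "separation C A B"
    and C': "component C' (del L (removed (S \<union> (V A \<inter> V B))))"
    and a: "a \<in> V C'" "a \<in> V C" "a \<in> V A"
  shows "V C' \<subseteq> V A - V B"
proof -
  have "subgraph C' C"
    using connected_subgraph_in_component[OF component_connected[OF C']
        component_subgraph_del[OF C'] live_component[OF C] a(1,2)] removed_Un by simp
  moreover have "V C' \<inter> (V A \<inter> V B) = {}" using component_subset[OF C'] removed_Un by auto
  ultimately show ?thesis
    using connected_avoiding_separator[OF sep component_connected[OF C']] a(1,3) by blast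
qed

text \<open>A separation that the tangle fails to orient: if both sides contain far members
  its separator splits C, otherwise every far member of C meets the r'-ball around it.\<close>

lemma unoriented_separation_cut:
  assumes C: "C \<in> live S"
    and sep: "separation C A B" and order: "sep_order A B < \<theta>"
    and AB: "(A, B) \<notin> gtangle G (members_in F C) r' \<theta> (removed S) C"
    and BA: "(B, A) \<notin> gtangle G (members_in F C) r' \<theta> (removed S) C"
  shows "\<exists>T. kill_cut S C T \<or> split_cut S C T"
proof -
  define U where "U = V A \<inter> V B"
  have U: "U \<subseteq> V C" "card U \<le> \<theta> - 1"
    using separationD(4)[OF sep] order unfolding U_def sep_order_def by auto
  have "sep_order B A < \<theta>" using order unfolding sep_order_def by (simp add: Int_commute)
  then have same: "side_has_member S C A U \<longleftrightarrow> side_has_member S C B U"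
    using AB BA sep separation_sym[OF sep] order unfolding mem_gtangle_iff U_def
    by (auto simp: Int_commute)
  show ?thesis
  proof (cases "side_has_member S C A U")
    case True
    obtain XA XB where XA: "far_member S XA" "subgraph XA C" "subgraph XA (del A (ball G r' U))"
      and XB: "far_member S XB" "subgraph XB C" "subgraph XB (del B (ball G r' U))"
      using True same unfolding side_has_member_def by blast
    have avoid: "V XA \<inter> ball G r' U = {}" "V XB \<inter> ball G r' U = {}"
      using XA(3) XB(3) subgraph_del_iff[of XA A "ball G r' U"] subgraph_del_iff[of XB B "ball G r' U"]
      by blast+
    have "\<not> subgraph XB C'"
      if C': "component C' (del L (removed (S \<union> U)))" "subgraph XA C'" for C'
    proof
      assume "subgraph XB C'"
      obtain a where "a \<in> V XA" using far_member_nonempty[OF XA(1)] by blast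
      then have "a \<in> V C'" "a \<in> V C" "a \<in> V A"
        using subgraphD(1)[OF XA(3)] subgraphD(1)[OF C'(2)] subgraphD(1)[OF XA(2)] by auto
      then have "V C' \<subseteq> V A - V B"
        using component_beyond_separator[OF C sep C'(1)[unfolded U_def]] by blast
      moreover obtain b where "b \<in> V XB" using far_member_nonempty[OF XB(1)] by blast
      ultimately show False
        using \<open>subgraph XB C'\<close> subgraphD(1)[OF XB(3)] subgraphD(1)[of XB C'] by auto
    qed
    then have "split_cut S C U"
      unfolding split_cut_def using U XA(2) XB(2) far_member_Un[OF XA(1) avoid(1)]
        far_member_Un[OF XB(1) avoid(2)] by blast
    then show ?thesis by blast
  next
    case False
    have "V X \<inter> ball G r' U \<noteq> {}" if X: "far_member S X" "subgraph X C" for X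
      using far_member_side[OF C sep X] False same X unfolding side_has_member_def U_def by blast
    then have "kill_cut S C U" unfolding kill_cut_def using U by auto
    then show ?thesis by blast
  qed
qed

text \<open>A far member avoiding the r'-balls around the three separators would avoid all three
  small sides, which cover C.\<close>

lemma covering_sides_cut:
  fixes A B :: "nat \<Rightarrow> 'a ugraph"
  assumes C: "C \<in> live S"
    and T: "\<And>i. i < 3 \<Longrightarrow> (A i, B i) \<in> gtangle G (members_in F C) r' \<theta> (removed S) C"
    and cover: "(\<Union>i<3. V (A i)) = V C"
  shows "\<exists>T. kill_cut S C T"
proof -
  define U where "U = (\<Union>i<3. V (A i) \<inter> V (B i))"
  have sep: "separation C (A i) (B i)" "card (V (A i) \<inter> V (B i)) \<le> \<theta> - 1" if "i < 3" for i
    using T[OF that] unfolding mem_gtangle_iff sep_order_def by auto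
  have "U \<subseteq> V C" unfolding U_def using separationD(4)[OF sep(1)] by blast
  moreover have "card U \<le> 3 * (\<theta> - 1)"
  proof -
    have "card U \<le> (\<Sum>i<3. card (V (A i) \<inter> V (B i)))" unfolding U_def by (rule card_UN_le) simp
    also have "\<dots> \<le> (\<Sum>i<(3::nat). \<theta> - 1)" using sep(2) by (intro sum_mono) simp
    finally show ?thesis by simp
  qed
  moreover have "V X \<inter> ball G r' U \<noteq> {}" if X: "far_member S X" "subgraph X C" for X
  proof
    assume avoid: "V X \<inter> ball G r' U = {}"
    have "V X \<inter> V (A i) = {}" if "i < 3" for i
    proof (rule gtangle_small_side[OF C T[OF that] X])
      show "V X \<inter> ball G r' (V (A i) \<inter> V (B i)) = {}"
        using avoid ball_mono[of "V (A i) \<inter> V (B i)" U r' r' G] that unfolding U_def by blast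
    qed
    then have "V X = {}" using subgraphD(1)[OF X(2)] cover by blast
    then show False using far_member_nonempty[OF X(1)] by blast
  qed
  ultimately have "kill_cut S C U" unfolding kill_cut_def by blast
  then show ?thesis by blast
qed

text \<open>The candidate orientation always satisfies (T3) and consists of small separations, so
  if it is not a tangle then (T1) or (T2) fails.\<close>

lemma no_tangle_cut:
  assumes C: "C \<in> live S"
    and no_tangle: "\<not> gtangle_exists G (members_in F C) r' \<theta> (removed S) C"
  shows "\<exists>T. kill_cut S C T \<or> split_cut S C T"
proof -
  define \<T> where "\<T> = gtangle G (members_in F C) r' \<theta> (removed S) C"
  have small: "separation C A B \<and> sep_order A B < \<theta>" if "(A, B) \<in> \<T>" for A B
    using that unfolding \<T>_def mem_gtangle_iff by blast
  have proper: "V A \<noteq> V C" if "(A, B) \<in> \<T>" for A B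
    using that gtangle_proper[OF C] unfolding \<T>_def by blast
  have "\<not> (\<forall>A B. separation C A B \<and> sep_order A B < \<theta> \<longrightarrow> (A, B) \<in> \<T> \<or> (B, A) \<in> \<T>) \<or>
    \<not> (\<forall>(A1, B1)\<in>\<T>. \<forall>(A2, B2)\<in>\<T>. \<forall>(A3, B3)\<in>\<T>.
         \<not> (V A1 \<union> V A2 \<union> V A3 = V C \<and> E A1 \<union> E A2 \<union> E A3 = E C))"
    using no_tangle small proper unfolding gtangle_exists_def is_tangle_def \<T>_def[symmetric]
    by fast
  then show ?thesis
  proof
    assume "\<not> (\<forall>A B. separation C A B \<and> sep_order A B < \<theta> \<longrightarrow> (A, B) \<in> \<T> \<or> (B, A) \<in> \<T>)"
    then obtain A B where "separation C A B" "sep_order A B < \<theta>" "(A, B) \<notin> \<T>" "(B, A) \<notin> \<T>"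
      by blast
    then show ?thesis using unoriented_separation_cut[OF C] unfolding \<T>_def by blast
  next
    assume "\<not> (\<forall>(A1, B1)\<in>\<T>. \<forall>(A2, B2)\<in>\<T>. \<forall>(A3, B3)\<in>\<T>.
         \<not> (V A1 \<union> V A2 \<union> V A3 = V C \<and> E A1 \<union> E A2 \<union> E A3 = E C))"
    then obtain A1 B1 A2 B2 A3 B3 where
      AB: "(A1, B1) \<in> \<T>" "(A2, B2) \<in> \<T>" "(A3, B3) \<in> \<T>" "V A1 \<union> V A2 \<union> V A3 = V C"
      by auto
    define A where "A = (\<lambda>i::nat. if i = 0 then A1 else if i = 1 then A2 else A3)"
    define B where "B = (\<lambda>i::nat. if i = 0 then B1 else if i = 1 then B2 else B3)"
    have "(A i, B i) \<in> \<T>" if "i < 3" for i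
      using AB that unfolding A_def B_def by auto
    moreover have "(\<Union>i<3. V (A i)) = V C"
      using AB(4) unfolding A_def B_def by (auto simp: lessThan_nat_numeral)
    ultimately show ?thesis using covering_sides_cut[OF C, of A B] unfolding \<T>_def by blast
  qed
qed

lemma refinement_step:
  assumes I: "invariant S K" and C: "C \<in> live S"
    and no_tangle: "\<not> gtangle_exists G (members_in F C) r' \<theta> (removed S) C"
  obtains T K' where "invariant (S \<union> T) K'" "T \<noteq> {}" "T \<subseteq> V C"
proof -
  obtain T where "kill_cut S C T \<or> split_cut S C T" using no_tangle_cut[OF C no_tangle] by blast
  then show ?thesis
  proof
    assume cut: "kill_cut S C T"
    then show ?thesis
      using that kill_step[OF I C cut] kill_cut_nonempty[OF C cut] unfolding kill_cut_def by blast
  next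
    assume cut: "split_cut S C T"
    then show ?thesis
      using that split_step[OF I C cut] split_cut_nonempty[OF C cut]
      unfolding split_cut_def by blast
  qed
qed

definition tangled :: "'a set \<Rightarrow> bool" where
  "tangled S \<longleftrightarrow> (\<forall>C\<in>live S. gtangle_exists G (members_in F C) r' \<theta> (removed S) C)"

text \<open>Each refinement step deletes new vertices of L, so the process terminates.\<close>

lemma invariant_reaches_tangled: "invariant S K \<Longrightarrow> \<exists>S' K'. invariant S' K' \<and> tangled S'"
proof (induction "card (V L - removed S)" arbitrary: S K rule: less_induct)
  case less
  show ?case
  proof (cases "tangled S")
    case False
    then obtain C where C: "C \<in> live S" "\<not> gtangle_exists G (members_in F C) r' \<theta> (removed S) C"
      unfolding tangled_def by blast
    obtain T K' where step: "invariant (S \<union> T) K'" "T \<noteq> {}" "T \<subseteq> V C"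
      using refinement_step[OF less.prems C] by blast
    have "V C \<subseteq> V L - removed S" using component_subset[OF live_component[OF C(1)]] by simp
    then have "V L - removed (S \<union> T) \<subset> V L - removed S"
      unfolding removed_Un using step(2,3) by blast
    then have "card (V L - removed (S \<union> T)) < card (V L - removed S)"
      using finite_V_L by (meson finite_Diff psubset_card_mono)
    then show ?thesis using less.hyps step(1) by blast
  qed (use less.prems in blast)
qed

section \<open>The final deleted set\<close>

definition Zstar :: "'a set \<Rightarrow> 'a set" where
  "Zstar S = removed S \<union> (ball G r' (removed S) \<inter> V L - (\<Union>C\<in>live S. V C))"

lemma Zstar_bounds:
  assumes "S \<subseteq> V L"
  shows "Zstar S \<subseteq> V G" "ball G r' Z \<subseteq> Zstar S" "Zstar S \<subseteq> ball G r' Z \<union> V L"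
  using assms removed_subset_V[OF assms] V_L_subset unfolding Zstar_def removed_def by auto

lemma Zstar_subset_balls:
  assumes "S \<subseteq> V L"
  shows "Zstar S \<subseteq> ball G (2 * r') Z \<union> ball G r' S"
proof -
  have "Zstar S \<subseteq> ball G r' (removed S)"
    using subset_ball[OF r'_nonneg removed_subset_V[OF assms]] unfolding Zstar_def by blast
  also have "\<dots> = ball G r' (ball G r' Z) \<union> ball G r' S" unfolding removed_def by (rule ball_Un)
  also have "\<dots> \<subseteq> ball G (2 * r') Z \<union> ball G r' S" using ball_ball[of G r' r' Z] by auto
  finally show ?thesis .
qed

lemma card_bound:
  assumes theta: "\<theta> \<ge> 1" and I: "invariant S K"
  shows "real (card S) \<le> max (2 * real k - 3) 1 * (3 * real \<theta> - 3)"
proof -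
  have K: "killed_ok S K" and budget: "budget_ok S K" using I unfolding invariant_def by blast+
  have "real (card S) \<le> max (2 * real k - 3) 1 * (3 * real (\<theta> - 1))"
  proof (cases "S = {}")
    case False
    then show ?thesis
      using budget budget_final live_card_bound[OF K] unfolding budget_ok_def by blast
  qed simp
  then show ?thesis using theta by (simp add: of_nat_diff)
qed

lemma Zstar_centered:
  assumes theta: "\<theta> \<ge> 1" and eta: "\<eta> \<ge> 0" and I: "invariant S K" and Z: "centered G \<xi> \<eta> Z"
  shows "centered G (\<xi> + max (2 * real k - 3) 1 * (3 * real \<theta> - 3)) (\<eta> + 2 * r') (Zstar S)"
proof -
  have S: "S \<subseteq> V L" using I unfolding invariant_def by blast
  obtain W where W: "finite W" "real (card W) \<le> \<xi>" "Z \<subseteq> ball G \<eta> W"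
    using Z unfolding centered_def by blast
  have "ball G (2 * r') Z \<subseteq> ball G (2 * r') (ball G \<eta> W)" using W(3) by (rule ball_mono) simp
  also have "\<dots> \<subseteq> ball G (\<eta> + 2 * r') W"
    using ball_ball[of G "2 * r'" \<eta> W] by (simp add: add.commute)
  finally have "Zstar S \<subseteq> ball G (\<eta> + 2 * r') (W \<union> S)"
    using Zstar_subset_balls[OF S] ball_mono[of S "W \<union> S" r' "\<eta> + 2 * r'" G] eta r'_nonneg
    unfolding ball_Un by auto
  moreover have "finite (W \<union> S)" using W(1) S finite_V_L by (meson finite_UnI finite_subset)
  moreover have "real (card (W \<union> S)) \<le> real (card W) + real (card S)"
    using card_Un_le[of W S] by linarith
  ultimately show ?thesis using W(2) card_bound[OF theta I] unfolding centered_def by force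
qed

lemma Zstar_outside_centered:
  assumes theta: "\<theta> \<ge> 1" and I: "invariant S K"
  shows "centered G (max (2 * real k - 3) 1 * (3 * real \<theta> - 3)) (2 * r')
    (Zstar S - ball G (2 * r') Z)"
proof -
  have S: "S \<subseteq> V L" using I unfolding invariant_def by blast
  have "ball G r' S \<subseteq> ball G (2 * r') S" using r'_nonneg by (intro ball_mono) auto
  then have "Zstar S - ball G (2 * r') Z \<subseteq> ball G (2 * r') S"
    using Zstar_subset_balls[OF S] by blast
  moreover have "finite S" using S finite_V_L by (rule finite_subset)
  ultimately show ?thesis using card_bound[OF theta I] unfolding centered_def by blast
qed

text \<open>A member avoiding removed S lies in a component of L - removed S; if that component
  is not live, the member meets the r'-ball around removed S outside the live components.\<close>

lemma Zstar_hits_members: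
  assumes X: "X \<in> F - members_in F (gunion (live S))"
  shows "V X \<inter> Zstar S \<noteq> {}"
proof
  assume avoid: "V X \<inter> Zstar S = {}"
  then have "V X \<inter> removed S = {}" unfolding Zstar_def by blast
  then obtain CX where CX: "component CX (del L (removed S))" "subgraph X CX"
    using member_component X by blast
  show False
  proof (cases "CX \<in> live S")
    case True
    then have "subgraph X (gunion (live S))"
      using CX(2) unfolding subgraph_def gunion_def by auto
    then show False using X unfolding members_in_def by blast
  next
    case False
    then have "\<not> far_member S X" using CX unfolding live_def by blast
    then obtain x where x: "x \<in> V X" "x \<in> ball G r' (removed S)"
      using X unfolding far_member_def by blast
    have "x \<notin> V C" if "C \<in> live S" for C
      using component_eq[OF live_component[OF that] CX(1)] subgraphD(1)[OF CX(2)] x(1) False that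
      by blast
    moreover have "x \<in> V L" using x(1) X member_subgraph subgraphD(1) by blast
    ultimately have "x \<in> Zstar S" using x(2) unfolding Zstar_def by blast
    then show False using avoid x(1) by blast
  qed
qed

lemma live_tangle_Zstar:
  assumes C: "C \<in> live S"
    and tangle: "gtangle_exists G (members_in F C) r' \<theta> (removed S) C"
  shows "gtangle_exists G (members_in F C) r' \<theta> (Zstar S) C"
proof -
  define Ext where "Ext = ball G r' (removed S) \<inter> V L - (\<Union>C\<in>live S. V C)"
  have "Ext \<inter> V C = {}" unfolding Ext_def using C by blast
  then have "ball G r' Ext \<inter> V C \<subseteq> ball G r' (removed S)"
    using ball_outside_component[OF boundary_removed live_component[OF C]] by blast
  then have "V X \<inter> ball G r' (Zstar S) = {} \<longleftrightarrow> V X \<inter> ball G r' (removed S) = {}"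
    if "X \<in> members_in F C" for X
    using that subgraphD(1) unfolding members_in_def Zstar_def Ext_def[symmetric] ball_Un by blast
  then have "avoid (members_in F C) (ball G r' (Zstar S)) =
      avoid (members_in F C) (ball G r' (removed S))"
    unfolding avoid_def by blast
  then show ?thesis using tangle unfolding gtangle_exists_def gtangle_def by simp
qed

lemma live_component_Zstar:
  assumes C: "C \<in> live S" and D: "component D (del L (Zstar S))" "V C \<inter> V D \<noteq> {}"
  shows "subgraph D C"
proof -
  have "removed S \<subseteq> Zstar S" unfolding Zstar_def by blast
  then have "subgraph D (del L (removed S))" using component_subgraph_del[OF D(1)] by blast
  then show ?thesis
    using connected_subgraph_in_component[OF component_connected[OF D(1)] _ live_component[OF C]]
      D(2)
    by blast
qed

lemma live_properties:
  assumes "C \<in> live S"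
  shows "induced_subgraph C L" "connected C" "nbhd G (V C) \<subseteq> Zstar S"
  using component_del_induced component_connected nbhd_component_subset[OF boundary_removed]
    live_component[OF assms] unfolding Zstar_def by blast+

end

theorem lemma3p3:
  fixes G L :: "'a ugraph" and \<F> :: "'a ugraph set" and k \<theta> :: nat
    and r r' \<xi> \<eta> :: real and Z :: "'a set"
  assumes G: "finite_graph G"
    and L: "induced_subgraph L G"
    and F: "\<forall>X\<in>\<F>. subgraph X L \<and> connected X"
    and theta: "\<theta> \<ge> 1"
    and nonneg: "r \<ge> 0" "r' \<ge> 0" "\<xi> \<ge> 0" "\<eta> \<ge> 0"
    and rr: "r' \<ge> r / 2"
    and Zsub: "Z \<subseteq> V G" and NZ: "nbhd G (V L) \<subseteq> Z"
    and Zc: "centered G \<xi> \<eta> Z"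
    and nopack: "\<not> (\<exists>\<S>\<subseteq>\<F>. finite \<S> \<and> card \<S> = k \<and>
                    (\<forall>X\<in>\<S>. \<forall>Y\<in>\<S>. X \<noteq> Y \<longrightarrow> setdist G (V X) (V Y) \<ge> ereal r))"
  shows "\<exists>Zs \<H>. Zs \<subseteq> V G \<and> ball G r' Z \<subseteq> Zs \<and> Zs \<subseteq> ball G r' Z \<union> V L \<and>
     finite \<H> \<and> card \<H> \<le> k - 1 \<and>
     (\<forall>H\<in>\<H>. induced_subgraph H L \<and> connected H) \<and>
     (\<forall>H1\<in>\<H>. \<forall>H2\<in>\<H>. H1 \<noteq> H2 \<longrightarrow> V H1 \<inter> V H2 = {}) \<and>
     centered G (\<xi> + max (2 * real k - 3) 1 * (3 * real \<theta> - 3)) (\<eta> + 2 * r') Zs \<and>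
     (\<forall>X\<in>\<F> - members_in \<F> (gunion \<H>). V X \<inter> Zs \<noteq> {}) \<and>
     centered G (max (2 * real k - 3) 1 * (3 * real \<theta> - 3)) (2 * r') (Zs - ball G (2 * r') Z) \<and>
     (\<forall>H\<in>\<H>. gtangle_exists G (members_in \<F> H) r' \<theta> Zs H \<and> nbhd G (V H) \<subseteq> Zs \<and>
        (\<forall>C. component C (del L Zs) \<and> V H \<inter> V C \<noteq> {} \<longrightarrow> subgraph C H))"
proof -
  interpret tangle_cover G L \<F> Z r r' \<theta> k
    by unfold_locales (use G L F nonneg(2) rr Zsub NZ nopack in \<open>auto simp: scattered_def\<close>)
  obtain S K where I: "invariant S K" and tangled: "tangled S"
    using invariant_reaches_tangled[OF invariant_empty] by blast
  have S: "S \<subseteq> V L" and K: "killed_ok S K" using I unfolding invariant_def by blast+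
  show ?thesis
  proof (intro exI[of _ "Zstar S"] exI[of _ "live S"] conjI ballI impI allI)
    show "Zstar S \<subseteq> V G" "ball G r' Z \<subseteq> Zstar S" "Zstar S \<subseteq> ball G r' Z \<union> V L"
      using Zstar_bounds[OF S] by blast+
    show "finite (live S)" by (rule finite_live)
    show "card (live S) \<le> k - 1" using live_card_bound[OF K] by linarith
    show "induced_subgraph H L" "connected H" "nbhd G (V H) \<subseteq> Zstar S" if "H \<in> live S" for H
      using live_properties[OF that] by blast+
    show "V H1 \<inter> V H2 = {}" if "H1 \<in> live S" "H2 \<in> live S" "H1 \<noteq> H2" for H1 H2
      using components_disjoint live_component that by blast
    show "centered G (\<xi> + max (2 * real k - 3) 1 * (3 * real \<theta> - 3)) (\<eta> + 2 * r') (Zstar S)"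
      by (rule Zstar_centered[OF theta nonneg(4) I Zc])
    show "centered G (max (2 * real k - 3) 1 * (3 * real \<theta> - 3)) (2 * r')
        (Zstar S - ball G (2 * r') Z)"
      by (rule Zstar_outside_centered[OF theta I])
    show "V X \<inter> Zstar S \<noteq> {}" if "X \<in> \<F> - members_in \<F> (gunion (live S))" for X
      using Zstar_hits_members[OF that] .
    show "gtangle_exists G (members_in \<F> H) r' \<theta> (Zstar S) H" if "H \<in> live S" for H
      using live_tangle_Zstar[OF that] tangled that unfolding tangled_def by blast
    show "subgraph C H" if "H \<in> live S" "component C (del L (Zstar S)) \<and> V H \<inter> V C \<noteq> {}" for H C
      using live_component_Zstar[OF that(1)] that(2) by blast
  qed
qed

end
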